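(* With $\tau=(\sigma_{n-1}\cdots\sigma_1)^n\in B_n$, for every $m\ge0$, \[\Phi(\tau^m)=\sum_{i=0}^{n-1}\sum_{j=0}^{n-1}q^{mn(n-1-2i)}\,C(n)_{i+1,j+1}\,\Phi(\tau^j),\] where $\Phi(\tau^0)=\mathrm{id}_{V^{\otimes n}}$.
   Context: $V$ is the $\mathbb{C}(q)$-super vector space with basis $v_0$ (even), $v_1$ (odd). Fix $n\ge 2$. $\check R:V\otimes V\to V\otimes V$ is given by $\check R(v_0\otimes v_0)=qv_0\otimes v_0$, $\check R(v_1\otimes v_0)=v_0\otimes v_1$, $\check R(v_0\otimes v_1)=v_1\otimes v_0+(q-q^{-1})v_0\otimes v_1$, $\check R(v_1\otimes v_1)=-q^{-1}v_1\otimes v_1$. $\Phi(\sigma_t)=\mathrm{id}^{\otimes(t-1)}\otimes\check R\otimes\mathrm{id}^{\otimes(n-t-1)}$ defines an action $\Phi$ of the braid group $B_n$ on $V^{\otimes n}$. For $n\geq 2$, $B(n)$ is the $n\times n$ matrix with entries $B(n)_{ij}=q^{(i-1)n(n-1-2(j-1))}$ ($1\le i,j\le n$), a Vandermonde matrix hence invertible over $\mathbb{C}(q)$; $C(n)=B(n)^{-1}$. *)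

theory Defs
  imports "HOL-Computational_Algebra.Polynomial" "HOL-Computational_Algebra.Fraction_Field"
begin

text \<open>The ground field C(q): fractions of complex polynomials; q is the indeterminate.\<close>
type_synonym K = "complex poly fract"

definition qq :: K where "qq = Fract [:0, 1:] 1"

text \<open>Basis of V^{\<otimes>n}: words w of length n over {v0, v1}; False = v0, True = v1.
  Linear endomorphisms of V^{\<otimes>n} are represented by their matrices
  M w' w = coefficient of basis vector w' in the image of basis vector w.\<close>
definition words :: "nat \<Rightarrow> bool list set" where
  "words n = {w. length w = n}"

type_synonym endo = "bool list \<Rightarrow> bool list \<Rightarrow> K"

definition mmul :: "nat \<Rightarrow> endo \<Rightarrow> endo \<Rightarrow> endo" where
  "mmul n A B = (\<lambda>w' w. \<Sum>u\<in>words n. A w' u * B u w)"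

definition mid :: endo where
  "mid = (\<lambda>w' w. if w' = w then 1 else 0)"

fun mpow :: "nat \<Rightarrow> endo \<Rightarrow> nat \<Rightarrow> endo" where
  "mpow n A 0 = mid"
| "mpow n A (Suc k) = mmul n A (mpow n A k)"

text \<open>Rc a b c d = coefficient of v_c \<otimes> v_d in R(v_a \<otimes> v_b).\<close>
definition Rc :: "bool \<Rightarrow> bool \<Rightarrow> bool \<Rightarrow> bool \<Rightarrow> K" where
  "Rc a b c d =
     (if \<not> a \<and> \<not> b then (if \<not> c \<and> \<not> d then qq else 0)
      else if a \<and> \<not> b then (if \<not> c \<and> d then 1 else 0)
      else if \<not> a \<and> b then (if c \<and> \<not> d then 1 else if \<not> c \<and> d then qq - inverse qq else 0)
      else (if c \<and> d then - inverse qq else 0))"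

text \<open>Phi(sigma_t) = id^{\<otimes>(t-1)} \<otimes> R \<otimes> id^{\<otimes>(n-t-1)}, 1 \<le> t \<le> n-1; R acts on the
  tensor positions t, t+1 (list indices t-1, t). R is even, so no super signs arise.\<close>
definition Phi_sigma :: "nat \<Rightarrow> endo" where
  "Phi_sigma t = (\<lambda>w' w.
     if (\<forall>i<length w. i \<noteq> t - 1 \<and> i \<noteq> t \<longrightarrow> w' ! i = w ! i)
     then Rc (w ! (t - 1)) (w ! t) (w' ! (t - 1)) (w' ! t) else 0)"

fun Phi_desc :: "nat \<Rightarrow> nat \<Rightarrow> endo" where
  "Phi_desc n 0 = mid"
| "Phi_desc n (Suc k) = mmul n (Phi_sigma (Suc k)) (Phi_desc n k)"

definition Phi_tau :: "nat \<Rightarrow> endo" where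
  "Phi_tau n = mpow n (Phi_desc n (n - 1)) n"

definition Phi_tau_pow :: "nat \<Rightarrow> nat \<Rightarrow> endo" where
  "Phi_tau_pow n m = mpow n (Phi_tau n) m"

text \<open>B(n), 0-indexed: B i j = q^(i n (n-1-2j)), 0 \<le> i,j < n; C(n) = B(n)^{-1}.\<close>
definition Bmat :: "nat \<Rightarrow> nat \<Rightarrow> nat \<Rightarrow> K" where
  "Bmat n i j = qq powi (int i * int n * (int n - 1 - 2 * int j))"

definition Cmat :: "nat \<Rightarrow> nat \<Rightarrow> nat \<Rightarrow> K" where
  "Cmat n = (THE C.
      (\<forall>i j. (i \<ge> n \<or> j \<ge> n) \<longrightarrow> C i j = 0) \<and>
      (\<forall>i<n. \<forall>j<n. (\<Sum>k<n. C i k * Bmat n k j) = (if i = j then 1 else 0)) \<and>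
      (\<forall>i<n. \<forall>j<n. (\<Sum>k<n. Bmat n i k * C k j) = (if i = j then 1 else 0)))"

end

theory Submission
  imports Defs
begin

text \<open>The full twist \<open>\<Phi>(\<tau>)\<close> is diagonalizable with the \<open>n\<close> distinct eigenvalues
  \<open>\<lambda>\<^sub>c = q\<^sup>n\<^sup>(\<^sup>n\<^sup>-\<^sup>1\<^sup>-\<^sup>2\<^sup>c\<^sup>)\<close>, \<open>0 \<le> c < n\<close>; given this, the identity is Lagrange
  interpolation of \<open>m \<mapsto> \<lambda>\<^sup>m\<close> at these points, since \<open>C(n)\<close> inverts the Vandermonde
  matrix \<open>B(n) = (\<lambda>\<^sub>j\<^sup>i)\<close>.

  Diagonalizability is proved with fermionic creation operators \<open>a\<^sub>i\<^sup>\<dagger>\<close> on the word basis.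
  The R-matrix moves \<open>\<Phi>(\<sigma>\<^sub>p\<^sub>+\<^sub>1)\<close> past \<open>\<Sum> x\<^sub>i a\<^sub>i\<^sup>\<dagger>\<close> at the cost of a linear change of
  the coefficients \<open>x\<close>, so \<open>\<Phi>(\<tau>)\<close> moves past it through the \<open>n\<close>-th power of a linear map
  \<open>D\<close>. This \<open>D\<close> fixes \<open>(q\<^sup>j)\<^sub>j\<close> and is \<open>q\<^sup>-\<^sup>2\<close> times a cyclic shift on a complementary
  hyperplane, so \<open>D\<^sup>n\<close> is diagonal with eigenvalues \<open>1\<close> and \<open>q\<^sup>-\<^sup>2\<^sup>n\<close>. Building a word
  from the all-even word (an eigenvector for \<open>\<lambda>\<^sub>0\<close>) by creation operators, induction on the
  number \<open>k\<close> of odd letters splits its basis vector into eigenvectors for \<open>\<lambda>\<^sub>k\<close> and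
  \<open>\<lambda>\<^sub>k\<^sub>-\<^sub>1\<close>; the all-odd word is an eigenvector for \<open>\<lambda>\<^sub>n\<^sub>-\<^sub>1\<close>.\<close>

lemma qq_nonzero: "qq \<noteq> 0"
  by (simp add: qq_def eq_fract Zero_fract_def)

lemma qq_power_neq_one:
  assumes "k > 0"
  shows "qq ^ k \<noteq> 1"
proof -
  have "qq ^ k = Fract ([:0, 1:] ^ k) 1"
    unfolding qq_def by (induction k) (auto simp: One_fract_def)
  then show ?thesis
    using assms by (auto simp: One_fract_def eq_fract degree_power_eq dest: arg_cong[where f = degree])
qed

lemma two_neq_zero_K: "(2::K) \<noteq> 0"
proof -
  have "(2::K) = Fract (of_nat 2) 1"
    by (subst Fract_of_nat_eq) simp
  moreover have "Fract (of_nat 2) 1 \<noteq> (Fract 0 1 :: K)"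
    by (subst eq_fract(1)) auto
  ultimately show ?thesis
    by (metis Zero_fract_def)
qed

lemma finite_words [simp]: "finite (words n)"
proof -
  have "finite {xs. set xs \<subseteq> (UNIV::bool set) \<and> length xs = n}"
    by (rule finite_lists_length_eq) simp
  then show ?thesis
    by (simp add: words_def)
qed

lemma words_list_update [simp]: "w[j := a] \<in> words n \<longleftrightarrow> w \<in> words n"
  by (simp add: words_def)

type_synonym vec = "bool list \<Rightarrow> K"

definition supported :: "nat \<Rightarrow> vec \<Rightarrow> bool" where
  "supported n v \<longleftrightarrow> (\<forall>w. w \<notin> words n \<longrightarrow> v w = 0)"

definition mvmul :: "nat \<Rightarrow> endo \<Rightarrow> vec \<Rightarrow> vec" where
  "mvmul n A v = (\<lambda>w'. if w' \<in> words n then \<Sum>u\<in>words n. A w' u * v u else 0)"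

definition eigenvec :: "nat \<Rightarrow> endo \<Rightarrow> K \<Rightarrow> vec \<Rightarrow> bool" where
  "eigenvec n A \<mu> v \<longleftrightarrow> supported n v \<and> mvmul n A v = (\<lambda>u. \<mu> * v u)"

definition basis_vec :: "bool list \<Rightarrow> vec" where
  "basis_vec w = (\<lambda>u. if u = w then 1 else 0)"

lemma supported_mvmul [simp]: "supported n (mvmul n A v)"
  by (simp add: supported_def mvmul_def)

lemma supported_basis_vec: "w \<in> words n \<Longrightarrow> supported n (basis_vec w)"
  by (auto simp: supported_def basis_vec_def)

lemma supported_zero [simp]: "supported n (\<lambda>u. 0)"
  by (simp add: supported_def)

lemma supported_add:
  "supported n v \<Longrightarrow> supported n v' \<Longrightarrow> supported n (\<lambda>u. v u + v' u)"
  by (simp add: supported_def)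

lemma supported_scale: "supported n v \<Longrightarrow> supported n (\<lambda>u. a * v u)"
  by (simp add: supported_def)

lemma mvmul_mmul: "mvmul n (mmul n A B) v = mvmul n A (mvmul n B v)"
proof (rule ext)
  fix w'
  have "(\<Sum>u\<in>words n. (\<Sum>x\<in>words n. A w' x * B x u) * v u)
      = (\<Sum>x\<in>words n. A w' x * (\<Sum>u\<in>words n. B x u * v u))"
    by (simp add: sum_distrib_left sum_distrib_right mult.assoc) (rule sum.swap)
  then show "mvmul n (mmul n A B) v w' = mvmul n A (mvmul n B v) w'"
    by (simp add: mvmul_def mmul_def cong: sum.cong)
qed

lemma mvmul_basis_vec:
  assumes "w \<in> words n" "w' \<in> words n"
  shows "mvmul n A (basis_vec w) w' = A w' w"
proof -
  have "(\<Sum>u\<in>words n. A w' u * basis_vec w u) = (\<Sum>u\<in>words n. if u = w then A w' u else 0)"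
    by (rule sum.cong) (auto simp: basis_vec_def)
  then show ?thesis
    using assms by (simp add: mvmul_def)
qed

lemma mvmul_mid: "supported n v \<Longrightarrow> mvmul n mid v = v"
proof (rule ext)
  fix w assume "supported n v"
  have "(\<Sum>u\<in>words n. mid w u * v u) = (\<Sum>u\<in>words n. if w = u then v u else 0)"
    by (rule sum.cong) (auto simp: mid_def)
  then show "mvmul n mid v w = v w"
    using \<open>supported n v\<close> by (simp add: mvmul_def supported_def)
qed

lemma mvmul_add: "mvmul n A (\<lambda>u. v u + v' u) = (\<lambda>w. mvmul n A v w + mvmul n A v' w)"
  by (rule ext) (simp add: mvmul_def distrib_left sum.distrib)

lemma mvmul_scale: "mvmul n A (\<lambda>u. a * v u) = (\<lambda>w. a * mvmul n A v w)"
  by (rule ext) (simp add: mvmul_def sum_distrib_left mult.left_commute)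

lemma mvmul_sum: "mvmul n A (\<lambda>u. \<Sum>i\<in>I. v i u) = (\<lambda>w. \<Sum>i\<in>I. mvmul n A (v i) w)"
  by (rule ext) (simp add: mvmul_def sum_distrib_left sum.swap[of _ I])

lemma eigenvec_mid: "supported n v \<Longrightarrow> eigenvec n mid 1 v"
  by (simp add: eigenvec_def mvmul_mid)

lemma eigenvec_mmul:
  "eigenvec n A \<mu> v \<Longrightarrow> eigenvec n B \<nu> v \<Longrightarrow> eigenvec n (mmul n A B) (\<mu> * \<nu>) v"
  by (simp add: eigenvec_def mvmul_mmul mvmul_scale ac_simps)

lemma eigenvec_mpow:
  assumes "eigenvec n A \<mu> v"
  shows "eigenvec n (mpow n A m) (\<mu> ^ m) v"
proof (induction m)
  case 0
  then show ?case
    using assms eigenvec_mid by (simp add: eigenvec_def)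
next
  case (Suc m)
  then show ?case
    using eigenvec_mmul[OF assms] by simp
qed

lemma eigenvec_zero [simp]: "eigenvec n A \<mu> (\<lambda>u. 0)"
  by (simp add: eigenvec_def mvmul_def fun_eq_iff)

lemma eigenvec_add:
  "eigenvec n A \<mu> v \<Longrightarrow> eigenvec n A \<mu> v' \<Longrightarrow> eigenvec n A \<mu> (\<lambda>u. v u + v' u)"
  by (simp add: eigenvec_def supported_add mvmul_add distrib_left)

lemma eigenvec_scale: "eigenvec n A \<mu> v \<Longrightarrow> eigenvec n A \<mu> (\<lambda>u. a * v u)"
  by (simp add: eigenvec_def supported_scale mvmul_scale mult.left_commute)

lemma Phi_sigma_apply:
  assumes "1 \<le> t" "t < n" "w' \<in> words n"
  shows "mvmul n (Phi_sigma t) v w' =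
    (\<Sum>a\<in>UNIV. \<Sum>b\<in>UNIV. Rc a b (w'!(t-1)) (w'!t) * v (w'[t-1 := a, t := b]))"
proof -
  define f where "f = (\<lambda>(a, b). w'[t-1 := a, t := b])"
  have len: "length w' = n"
    using assms(3) by (simp add: words_def)
  have inj: "inj f"
  proof (rule injI)
    fix x y assume "f x = f y"
    then have "f x ! (t-1) = f y ! (t-1)" "f x ! t = f y ! t" by auto
    then show "x = y"
      using len assms by (cases x; cases y) (auto simp: f_def nth_list_update)
  qed
  have range: "range f \<subseteq> words n"
    using len by (auto simp: f_def words_def)
  have outside: "Phi_sigma t w' u * v u = 0" if "u \<in> words n - range f" for u
  proof -
    have "\<not> (\<forall>i<length u. i \<noteq> t - 1 \<and> i \<noteq> t \<longrightarrow> w' ! i = u ! i)"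
    proof
      assume agree: "\<forall>i<length u. i \<noteq> t - 1 \<and> i \<noteq> t \<longrightarrow> w' ! i = u ! i"
      have "u = f (u!(t-1), u!t)"
        by (rule nth_equalityI) (use agree that len assms in \<open>auto simp: f_def words_def nth_list_update\<close>)
      with that show False by auto
    qed
    then show ?thesis
      by (auto simp: Phi_sigma_def)
  qed
  have "mvmul n (Phi_sigma t) v w' = (\<Sum>u\<in>words n. Phi_sigma t w' u * v u)"
    using assms by (simp add: mvmul_def)
  also have "\<dots> = (\<Sum>u\<in>range f. Phi_sigma t w' u * v u)"
    by (rule sum.mono_neutral_right) (use range outside in auto)
  also have "\<dots> = (\<Sum>x\<in>UNIV. Phi_sigma t w' (f x) * v (f x))"
    by (simp add: sum.reindex[OF inj])
  also have "\<dots> = (\<Sum>x\<in>UNIV. Rc (fst x) (snd x) (w'!(t-1)) (w'!t) * v (f x))"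
    using len assms by (intro sum.cong) (auto simp: Phi_sigma_def f_def nth_list_update)
  also have "\<dots> = (\<Sum>a\<in>UNIV. \<Sum>b\<in>UNIV. Rc a b (w'!(t-1)) (w'!t) * v (w'[t-1 := a, t := b]))"
    by (simp add: UNIV_Times_UNIV[symmetric] sum.cartesian_product f_def split_beta
             del: UNIV_Times_UNIV)
  finally show ?thesis .
qed

lemma Phi_sigma_apply_Suc:
  assumes "Suc p < n" "w' \<in> words n"
  shows "mvmul n (Phi_sigma (Suc p)) v w' =
     Rc False False (w'!p) (w'!Suc p) * v (w'[p := False, Suc p := False])
   + Rc False True (w'!p) (w'!Suc p) * v (w'[p := False, Suc p := True])
   + Rc True False (w'!p) (w'!Suc p) * v (w'[p := True, Suc p := False])
   + Rc True True (w'!p) (w'!Suc p) * v (w'[p := True, Suc p := True])"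
  using Phi_sigma_apply[of "Suc p" n w' v] assms by (simp add: UNIV_bool)

lemma Rc_same_input: "Rc c c x y = (if x = c \<and> y = c then Rc c c c c else 0)"
  by (cases c; cases x; cases y) (simp_all add: Rc_def)

lemma eigenvec_Phi_sigma_const:
  assumes "1 \<le> t" "t < n"
  shows "eigenvec n (Phi_sigma t) (Rc c c c c) (basis_vec (replicate n c))"
proof -
  have "mvmul n (Phi_sigma t) (basis_vec (replicate n c)) w' = Rc c c c c * basis_vec (replicate n c) w'"
    for w'
  proof (cases "w' \<in> words n")
    case True
    then have len: "length w' = n"
      by (simp add: words_def)
    have "w' = replicate n c \<longleftrightarrow> (\<forall>i<n. w'!i = c)"
      by (simp add: list_eq_iff_nth_eq len)
    also have "\<dots> \<longleftrightarrow> (\<forall>i<n. i \<noteq> t - 1 \<and> i \<noteq> t \<longrightarrow> w'!i = c) \<and> w'!(t-1) = c \<and> w'!t = c"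
    proof
      assume "\<forall>i<n. w'!i = c"
      then show "(\<forall>i<n. i \<noteq> t - 1 \<and> i \<noteq> t \<longrightarrow> w'!i = c) \<and> w'!(t-1) = c \<and> w'!t = c"
        using assms by simp
    next
      assume "(\<forall>i<n. i \<noteq> t - 1 \<and> i \<noteq> t \<longrightarrow> w'!i = c) \<and> w'!(t-1) = c \<and> w'!t = c"
      then show "\<forall>i<n. w'!i = c"
        by (metis)
    qed
    finally have const: "w' = replicate n c \<longleftrightarrow>
        (\<forall>i<n. i \<noteq> t - 1 \<and> i \<noteq> t \<longrightarrow> w'!i = c) \<and> w'!(t-1) = c \<and> w'!t = c" .
    have "mvmul n (Phi_sigma t) (basis_vec (replicate n c)) w' = Phi_sigma t w' (replicate n c)"
      using True by (simp add: mvmul_basis_vec words_def)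
    also have "\<dots> = (if \<forall>i<n. i \<noteq> t - 1 \<and> i \<noteq> t \<longrightarrow> w'!i = c
        then Rc c c (w'!(t-1)) (w'!t) else 0)"
      using assms by (auto simp: Phi_sigma_def)
    also have "\<dots> = Rc c c c c * basis_vec (replicate n c) w'"
      unfolding Rc_same_input[of c "w'!(t-1)"] using const by (auto simp: basis_vec_def)
    finally show ?thesis .
  qed (auto simp: mvmul_def basis_vec_def words_def)
  then show ?thesis
    by (auto simp: eigenvec_def supported_basis_vec words_def)
qed

lemma eigenvec_Phi_desc_const:
  "k < n \<Longrightarrow> eigenvec n (Phi_desc n k) (Rc c c c c ^ k) (basis_vec (replicate n c))"
proof (induction k)
  case 0
  then show ?case
    by (simp add: eigenvec_mid supported_basis_vec words_def)
next
  case (Suc k)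
  have "eigenvec n (Phi_sigma (Suc k)) (Rc c c c c) (basis_vec (replicate n c))"
    using Suc.prems by (intro eigenvec_Phi_sigma_const) auto
  from eigenvec_mmul[OF this Suc.IH] Suc.prems show ?case
    by simp
qed

lemma eigenvec_Phi_tau_const:
  "1 \<le> n \<Longrightarrow> eigenvec n (Phi_tau n) ((Rc c c c c ^ (n-1)) ^ n) (basis_vec (replicate n c))"
  unfolding Phi_tau_def by (rule eigenvec_mpow, rule eigenvec_Phi_desc_const) simp

section \<open>Fermionic creation operators\<close>

definition parity_sign :: "bool \<Rightarrow> K" where
  "parity_sign b = (if b then -1 else 1)"

definition jw_sign :: "bool list \<Rightarrow> nat \<Rightarrow> K" where
  "jw_sign w i = (\<Prod>j<i. parity_sign (w!j))"

text \<open>The creation operator of the odd vector \<open>v\<^sub>1\<close> at tensor position \<open>i\<close>, with the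
  Koszul sign of moving it past the first \<open>i\<close> factors (a Jordan--Wigner transformation).\<close>
definition create :: "nat \<Rightarrow> nat \<Rightarrow> vec \<Rightarrow> vec" where
  "create n i v = (\<lambda>w. if w \<in> words n \<and> i < n \<and> w!i then jw_sign w i * v (w[i := False]) else 0)"

lemma parity_sign_square [simp]: "parity_sign a * parity_sign a = 1"
  by (simp add: parity_sign_def)

lemma jw_sign_Suc: "jw_sign w (Suc i) = jw_sign w i * parity_sign (w!i)"
  by (simp add: jw_sign_def)

lemma jw_sign_square [simp]: "jw_sign w i * jw_sign w i = 1"
  unfolding jw_sign_def prod.distrib[symmetric] by simp

lemma jw_sign_list_update:
  "jw_sign (w[j := a]) i =
    (if j < i \<and> j < length w then jw_sign w i * parity_sign a * parity_sign (w!j) else jw_sign w i)"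
proof (cases "j < i \<and> j < length w")
  case True
  define R where "R = (\<Prod>k\<in>{..<i}-{j}. parity_sign (w!k))"
  have "jw_sign (w[j := a]) i = parity_sign a * R"
    unfolding jw_sign_def R_def using True
    by (subst prod.remove[of _ j]) (auto intro!: prod.cong)
  moreover have "jw_sign w i = parity_sign (w!j) * R"
    unfolding jw_sign_def R_def using True by (subst prod.remove[of _ j]) auto
  ultimately show ?thesis
    using True by (cases "w!j") (simp_all add: parity_sign_def)
next
  case False
  then show ?thesis
    unfolding jw_sign_def by (auto intro!: prod.cong simp: nth_list_update list_update_beyond)
qed

lemma create_add: "create n i (\<lambda>u. v u + v' u) = (\<lambda>w. create n i v w + create n i v' w)"
  by (rule ext) (simp add: create_def algebra_simps)

lemma create_scale: "create n i (\<lambda>u. a * v u) = (\<lambda>w. a * create n i v w)"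
  by (rule ext) (simp add: create_def algebra_simps)

lemma create_sum: "create n i (\<lambda>u. \<Sum>j\<in>A. v j u) = (\<lambda>w. \<Sum>j\<in>A. create n i (v j) w)"
proof (rule ext)
  fix w
  show "create n i (\<lambda>u. \<Sum>j\<in>A. v j u) w = (\<Sum>j\<in>A. create n i (v j) w)"
    by (cases "w \<in> words n \<and> i < n \<and> w!i") (auto simp: create_def sum_distrib_left)
qed

lemma create_anticomm: "create n i (create n j v) w = - create n j (create n i v) w"
proof (cases "w \<in> words n \<and> i < n \<and> j < n \<and> i \<noteq> j")
  case True
  then have "length w = n"
    by (simp add: words_def)
  then show ?thesis
    using True by (cases "i < j")
      (auto simp: create_def jw_sign_list_update nth_list_update list_update_swap[of i j] parity_sign_def)
next
  case False
  then show ?thesis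
    by (auto simp: create_def nth_list_update words_def)
qed

lemma create_basis_vec:
  assumes "w \<in> words n" "i < n" "w!i"
  shows "create n i (basis_vec (w[i := False])) = (\<lambda>u. jw_sign w i * basis_vec w u)"
proof (rule ext)
  fix u
  have "u = w" if "u \<in> words n" "u!i" "u[i := False] = w[i := False]"
  proof (rule nth_equalityI)
    show "length u = length w"
      using that assms by (simp add: words_def)
    show "u!j = w!j" if "j < length u" for j
      using \<open>u[i := False] = w[i := False]\<close> \<open>u!i\<close> assms
      by (cases "j = i") (simp, metis nth_list_update_neq)
  qed
  then show "create n i (basis_vec (w[i := False])) u = jw_sign w i * basis_vec w u"
    using assms by (auto simp: create_def basis_vec_def)
qed

lemma list_update_swap3:
  "i \<noteq> p \<Longrightarrow> i \<noteq> t \<Longrightarrow> w[p := a, t := b, i := c] = w[i := c, p := a, t := b]"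
  by (metis list_update_swap)

lemma list_update_absorb_left: "p \<noteq> t \<Longrightarrow> w[t := c, p := a, t := b] = w[p := a, t := b]"
  by (metis list_update_overwrite list_update_swap)

lemma list_update_absorb_right: "p \<noteq> t \<Longrightarrow> w[p := a, t := b, p := c] = w[p := c, t := b]"
  by (metis list_update_overwrite list_update_swap)

lemma list_update_Suc_swap [simp]: "w[Suc p := b, p := a] = w[p := a, Suc p := b]"
  by (simp add: list_update_swap)

lemma qq_inverse_cancel [simp]: "qq * (inverse qq * x) = x" "inverse qq * (qq * x) = x"
  using qq_nonzero by (simp_all add: mult.assoc[symmetric])

text \<open>Each of the next three identities is a finite case check on the two letters at the
  positions \<open>p, p+1\<close> on which \<open>\<Phi>(\<sigma>\<^sub>p\<^sub>+\<^sub>1)\<close> acts.\<close>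

lemma Phi_sigma_create_other:
  assumes "Suc p < n" "i < n" "i \<noteq> p" "i \<noteq> Suc p"
  shows "mvmul n (Phi_sigma (Suc p)) (create n i v) = create n i (mvmul n (Phi_sigma (Suc p)) v)"
proof (rule ext)
  fix w'
  show "mvmul n (Phi_sigma (Suc p)) (create n i v) w' = create n i (mvmul n (Phi_sigma (Suc p)) v) w'"
  proof (cases "w' \<in> words n")
    case True
    then have "length w' = n"
      by (simp add: words_def)
    have rhs: "create n i (mvmul n (Phi_sigma (Suc p)) v) w' =
       (if w'!i then jw_sign w' i * mvmul n (Phi_sigma (Suc p)) v (w'[i := False]) else 0)"
      using True assms by (simp add: create_def)
    show ?thesis
      unfolding rhs
      apply (subst Phi_sigma_apply_Suc[OF assms(1) True])
      apply (subst Phi_sigma_apply_Suc[OF assms(1)], simp add: True)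
      using assms \<open>length w' = n\<close> True
      apply (cases "w'!p"; cases "w'!Suc p"; cases "i < p")
      apply (simp_all add: create_def jw_sign_list_update nth_list_update list_update_swap3 Rc_def
          parity_sign_def algebra_simps)
      done
  qed (simp add: mvmul_def create_def)
qed

lemma Phi_sigma_create_left:
  assumes "Suc p < n"
  shows "mvmul n (Phi_sigma (Suc p)) (create n p v)
     = (\<lambda>w. inverse qq * create n (Suc p) (mvmul n (Phi_sigma (Suc p)) v) w)"
proof (rule ext)
  fix w'
  show "mvmul n (Phi_sigma (Suc p)) (create n p v) w'
      = inverse qq * create n (Suc p) (mvmul n (Phi_sigma (Suc p)) v) w'"
  proof (cases "w' \<in> words n")
    case True
    then have "length w' = n"
      by (simp add: words_def)
    have rhs: "create n (Suc p) (mvmul n (Phi_sigma (Suc p)) v) w' =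
       (if w'!Suc p then jw_sign w' (Suc p) * mvmul n (Phi_sigma (Suc p)) v (w'[Suc p := False]) else 0)"
      using True assms by (simp add: create_def)
    show ?thesis
      unfolding rhs
      apply (subst Phi_sigma_apply_Suc[OF assms(1) True])
      apply (subst Phi_sigma_apply_Suc[OF assms(1)], simp add: True)
      using assms \<open>length w' = n\<close> True qq_nonzero
      apply (cases "w'!p"; cases "w'!Suc p")
      apply (simp_all add: create_def jw_sign_list_update nth_list_update list_update_absorb_left
          list_update_absorb_right jw_sign_Suc Rc_def parity_sign_def algebra_simps)
      done
  qed (simp add: mvmul_def create_def)
qed

lemma Phi_sigma_create_right:
  assumes "Suc p < n"
  shows "mvmul n (Phi_sigma (Suc p)) (create n (Suc p) v)
     = (\<lambda>w. inverse qq * create n p (mvmul n (Phi_sigma (Suc p)) v) w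
          + inverse qq * (qq - inverse qq) * create n (Suc p) (mvmul n (Phi_sigma (Suc p)) v) w)"
proof (rule ext)
  fix w'
  show "mvmul n (Phi_sigma (Suc p)) (create n (Suc p) v) w'
      = inverse qq * create n p (mvmul n (Phi_sigma (Suc p)) v) w'
          + inverse qq * (qq - inverse qq) * create n (Suc p) (mvmul n (Phi_sigma (Suc p)) v) w'"
  proof (cases "w' \<in> words n")
    case True
    then have "length w' = n"
      by (simp add: words_def)
    have rhs: "create n (Suc p) (mvmul n (Phi_sigma (Suc p)) v) w' =
       (if w'!Suc p then jw_sign w' (Suc p) * mvmul n (Phi_sigma (Suc p)) v (w'[Suc p := False]) else 0)"
       "create n p (mvmul n (Phi_sigma (Suc p)) v) w' =
       (if w'!p then jw_sign w' p * mvmul n (Phi_sigma (Suc p)) v (w'[p := False]) else 0)"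
      using True assms by (simp_all add: create_def)
    show ?thesis
      unfolding rhs
      apply (subst Phi_sigma_apply_Suc[OF assms(1) True])
      apply (subst Phi_sigma_apply_Suc[OF assms(1)], simp add: True)
      apply (subst Phi_sigma_apply_Suc[OF assms(1)], simp add: True)
      using assms \<open>length w' = n\<close> True qq_nonzero
      apply (cases "w'!p"; cases "w'!Suc p")
      apply (simp_all add: create_def jw_sign_list_update nth_list_update list_update_absorb_left
          list_update_absorb_right jw_sign_Suc Rc_def parity_sign_def algebra_simps)
      done
  qed (simp add: mvmul_def create_def)
qed

definition create_comb :: "nat \<Rightarrow> (nat \<Rightarrow> K) \<Rightarrow> vec \<Rightarrow> vec" where
  "create_comb n x v = (\<lambda>w. \<Sum>i<n. x i * create n i v w)"

lemma supported_create_comb [simp]: "supported n (create_comb n x v)"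
  by (simp add: supported_def create_comb_def create_def)

lemma create_comb_add: "create_comb n x (\<lambda>u. v u + v' u) = (\<lambda>w. create_comb n x v w + create_comb n x v' w)"
  by (rule ext) (simp add: create_comb_def create_add algebra_simps sum.distrib)

lemma create_comb_scale: "create_comb n x (\<lambda>u. a * v u) = (\<lambda>w. a * create_comb n x v w)"
  by (rule ext) (simp add: create_comb_def create_scale sum_distrib_left mult.left_commute)

lemma create_comb_zero [simp]: "create_comb n x (\<lambda>u. 0) = (\<lambda>u. 0)"
  using create_comb_scale[of n x 0 "\<lambda>u. 0"] by simp

lemma create_comb_add_coeffs:
  "create_comb n (\<lambda>j. x j + y j) v = (\<lambda>w. create_comb n x v w + create_comb n y v w)"
  by (rule ext) (simp add: create_comb_def algebra_simps sum.distrib)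

lemma create_comb_scale_coeffs: "create_comb n (\<lambda>j. a * x j) v = (\<lambda>w. a * create_comb n x v w)"
  by (rule ext) (simp add: create_comb_def sum_distrib_left mult.assoc)

lemma create_comb_cong: "(\<And>j. j < n \<Longrightarrow> x j = y j) \<Longrightarrow> create_comb n x v = create_comb n y v"
  by (rule ext) (simp add: create_comb_def)

lemma create_comb_delta: "i < n \<Longrightarrow> create_comb n (\<lambda>j. if j = i then 1 else 0) v = create n i v"
  by (rule ext) (simp add: create_comb_def if_distrib[of "\<lambda>a. a * _"] sum.delta' cong: if_cong)

lemma create_comb_anticomm: "create_comb n x (create_comb n y v) w = - create_comb n y (create_comb n x v) w"
proof -
  have "create_comb n x (create_comb n y v) w = (\<Sum>i<n. \<Sum>j<n. x i * y j * create n i (create n j v) w)"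
    unfolding create_comb_def by (simp add: create_sum create_scale sum_distrib_left mult.assoc)
  also have "\<dots> = (\<Sum>i<n. \<Sum>j<n. - (x i * y j * create n j (create n i v) w))"
    by (intro sum.cong refl) (subst create_anticomm, simp)
  also have "\<dots> = - (\<Sum>j<n. \<Sum>i<n. y j * x i * create n j (create n i v) w)"
    by (subst sum.swap) (simp add: sum_negf mult.commute)
  also have "\<dots> = - create_comb n y (create_comb n x v) w"
    unfolding create_comb_def by (simp add: create_sum create_scale sum_distrib_left mult.assoc)
  finally show ?thesis .
qed

lemma create_comb_square: "create_comb n x (create_comb n x v) = (\<lambda>w. 0)"
proof (rule ext)
  fix w
  have "2 * create_comb n x (create_comb n x v) w = 0"
    using create_comb_anticomm[of n x x v w] by (simp add: algebra_simps)
  then show "create_comb n x (create_comb n x v) w = 0"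
    using two_neq_zero_K by simp
qed

definition sigma_coeffs :: "nat \<Rightarrow> (nat \<Rightarrow> K) \<Rightarrow> nat \<Rightarrow> K" where
  "sigma_coeffs p x = (\<lambda>j. if j = p then inverse qq * x (Suc p)
     else if j = Suc p then inverse qq * x p + inverse qq * (qq - inverse qq) * x (Suc p) else x j)"

lemma sum_remove_two:
  "finite A \<Longrightarrow> a \<in> A \<Longrightarrow> b \<in> A \<Longrightarrow> a \<noteq> b \<Longrightarrow> sum f A = f a + f b + sum f (A - {a, b})"
  by (metis (no_types, lifting) Diff_insert2 add.assoc finite_Diff insert_Diff insert_iff
      sum.insert_remove sum.remove)

lemma Phi_sigma_create_comb:
  assumes "Suc p < n"
  shows "mvmul n (Phi_sigma (Suc p)) (create_comb n x v)
    = create_comb n (sigma_coeffs p x) (mvmul n (Phi_sigma (Suc p)) v)"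
proof (rule ext)
  fix w
  let ?\<sigma> = "Phi_sigma (Suc p)"
  let ?rest = "{..<n} - {p, Suc p}"
  have "mvmul n ?\<sigma> (create_comb n x v) w = (\<Sum>i<n. x i * mvmul n ?\<sigma> (create n i v) w)"
    unfolding create_comb_def by (simp add: mvmul_sum mvmul_scale)
  also have "\<dots> = x p * mvmul n ?\<sigma> (create n p v) w + x (Suc p) * mvmul n ?\<sigma> (create n (Suc p) v) w
      + (\<Sum>i\<in>?rest. x i * mvmul n ?\<sigma> (create n i v) w)"
    using assms by (intro sum_remove_two) auto
  also have "(\<Sum>i\<in>?rest. x i * mvmul n ?\<sigma> (create n i v) w)
      = (\<Sum>i\<in>?rest. sigma_coeffs p x i * create n i (mvmul n ?\<sigma> v) w)"
    using assms by (intro sum.cong) (auto simp: Phi_sigma_create_other sigma_coeffs_def)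
  also have "x p * mvmul n ?\<sigma> (create n p v) w + x (Suc p) * mvmul n ?\<sigma> (create n (Suc p) v) w
      = sigma_coeffs p x p * create n p (mvmul n ?\<sigma> v) w
        + sigma_coeffs p x (Suc p) * create n (Suc p) (mvmul n ?\<sigma> v) w"
    using assms by (simp add: Phi_sigma_create_left Phi_sigma_create_right sigma_coeffs_def algebra_simps)
  also have "sigma_coeffs p x p * create n p (mvmul n ?\<sigma> v) w
      + sigma_coeffs p x (Suc p) * create n (Suc p) (mvmul n ?\<sigma> v) w
      + (\<Sum>i\<in>?rest. sigma_coeffs p x i * create n i (mvmul n ?\<sigma> v) w)
      = create_comb n (sigma_coeffs p x) (mvmul n ?\<sigma> v) w"
    unfolding create_comb_def using assms by (intro sum_remove_two[symmetric]) auto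
  finally show "mvmul n ?\<sigma> (create_comb n x v) w = create_comb n (sigma_coeffs p x) (mvmul n ?\<sigma> v) w" .
qed

fun desc_coeffs :: "nat \<Rightarrow> (nat \<Rightarrow> K) \<Rightarrow> nat \<Rightarrow> K" where
  "desc_coeffs 0 x = x"
| "desc_coeffs (Suc k) x = sigma_coeffs k (desc_coeffs k x)"

lemma Phi_desc_create_comb:
  assumes "k < n" "supported n v"
  shows "mvmul n (Phi_desc n k) (create_comb n x v)
    = create_comb n (desc_coeffs k x) (mvmul n (Phi_desc n k) v)"
  using assms(1)
proof (induction k)
  case 0
  then show ?case
    using assms(2) by (simp add: mvmul_mid)
next
  case (Suc k)
  then show ?case
    by (simp add: mvmul_mmul Phi_sigma_create_comb)
qed

lemma Phi_tau_create_comb: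
  assumes "1 \<le> n" "supported n v"
  shows "mvmul n (Phi_tau n) (create_comb n x v)
    = create_comb n ((desc_coeffs (n-1) ^^ n) x) (mvmul n (Phi_tau n) v)"
proof -
  have "mvmul n (mpow n (Phi_desc n (n-1)) j) (create_comb n x v)
      = create_comb n ((desc_coeffs (n-1) ^^ j) x) (mvmul n (mpow n (Phi_desc n (n-1)) j) v)" for j
  proof (induction j)
    case 0
    then show ?case
      using assms(2) by (simp add: mvmul_mid)
  next
    case (Suc j)
    then show ?case
      using assms by (simp add: mvmul_mmul Phi_desc_create_comb)
  qed
  then show ?thesis
    unfolding Phi_tau_def .
qed

fun desc_coeff_top :: "(nat \<Rightarrow> K) \<Rightarrow> nat \<Rightarrow> K" where
  "desc_coeff_top x 0 = x 0"
| "desc_coeff_top x (Suc k) = inverse qq * desc_coeff_top x k + inverse qq * (qq - inverse qq) * x (Suc k)"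

lemma desc_coeffs_eq:
  "desc_coeffs k x j = (if j < k then inverse qq * x (Suc j) else if j = k then desc_coeff_top x k else x j)"
  by (induction k arbitrary: j) (auto simp: sigma_coeffs_def)

lemma desc_coeffs_cong:
  assumes "\<And>j. j < n \<Longrightarrow> x j = y j" "k < n" "j < n"
  shows "desc_coeffs k x j = desc_coeffs k y j"
proof -
  have "desc_coeff_top x k = desc_coeff_top y k"
    using assms(1,2) by (induction k) auto
  then show ?thesis
    using assms by (simp add: desc_coeffs_eq)
qed

lemma desc_coeffs_scale: "desc_coeffs k (\<lambda>j. a * x j) = (\<lambda>j. a * desc_coeffs k x j)"
proof -
  have "desc_coeff_top (\<lambda>j. a * x j) k = a * desc_coeff_top x k"
    by (induction k) (simp_all add: algebra_simps)
  then show ?thesis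
    by (simp add: desc_coeffs_eq fun_eq_iff)
qed

text \<open>The coefficient map \<open>desc_coeffs (n-1)\<close> of \<open>\<Phi>(\<sigma>\<^sub>n\<^sub>-\<^sub>1\<cdots>\<sigma>\<^sub>1)\<close> fixes
  \<open>j \<mapsto> q\<^sup>j\<close>, and on the complementary space of all \<open>j \<mapsto> q\<^sup>-\<^sup>j P j\<close> with
  \<open>\<Sum>P = 0\<close> it acts as \<open>q\<^sup>-\<^sup>2\<close> times the cyclic shift of \<open>P\<close>. Its \<open>n\<close>-th power is
  therefore diagonal, with eigenvalues \<open>1\<close> and \<open>q\<^sup>-\<^sup>2\<^sup>n\<close>.\<close>

definition qpow_coeffs :: "nat \<Rightarrow> K" where
  "qpow_coeffs j = qq ^ j"

definition qtwist :: "(nat \<Rightarrow> K) \<Rightarrow> nat \<Rightarrow> K" where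
  "qtwist P = (\<lambda>j. inverse qq ^ j * P j)"

lemma desc_coeffs_qpow_coeffs:
  assumes "j < n"
  shows "desc_coeffs (n-1) qpow_coeffs j = qpow_coeffs j"
proof -
  have "desc_coeff_top qpow_coeffs k = qq ^ k" for k
  proof (induction k)
    case (Suc k)
    have "inverse qq * qq ^ k + inverse qq * (qq - inverse qq) * qq ^ Suc k
        = qq ^ k * (inverse qq + (qq - inverse qq) * (inverse qq * qq))"
      by (simp add: algebra_simps)
    then show ?case
      using Suc qq_nonzero by (simp add: qpow_coeffs_def)
  qed (simp add: qpow_coeffs_def)
  then show ?thesis
    using assms by (auto simp: desc_coeffs_eq qpow_coeffs_def)
qed

lemma funpow_desc_coeffs_qpow_coeffs:
  "j < n \<Longrightarrow> (desc_coeffs (n-1) ^^ m) qpow_coeffs j = qpow_coeffs j"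
proof (induction m arbitrary: j)
  case (Suc m)
  then have "(desc_coeffs (n-1) ^^ Suc m) qpow_coeffs j = desc_coeffs (n-1) qpow_coeffs j"
    by (simp, intro desc_coeffs_cong) auto
  then show ?case
    using desc_coeffs_qpow_coeffs[OF Suc.prems] by simp
qed simp

lemma desc_coeff_top_qtwist:
  "desc_coeff_top (qtwist P) k
    = inverse qq ^ k * P 0 + (qq - inverse qq) * inverse qq ^ Suc k * (\<Sum>i\<in>{1..k}. P i)"
proof (induction k)
  case (Suc k)
  have "desc_coeff_top (qtwist P) (Suc k)
      = inverse qq * (inverse qq ^ k * P 0 + (qq - inverse qq) * inverse qq ^ Suc k * (\<Sum>i\<in>{1..k}. P i))
        + inverse qq * (qq - inverse qq) * (inverse qq ^ Suc k * P (Suc k))"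
    by (simp only: desc_coeff_top.simps Suc.IH) (simp add: qtwist_def)
  moreover have "(\<Sum>i\<in>{1..Suc k}. P i) = (\<Sum>i\<in>{1..k}. P i) + P (Suc k)"
    by simp
  ultimately show ?case
    by (simp add: algebra_simps)
qed (simp add: qtwist_def)

lemma sum_lessThan_rotate:
  assumes "1 \<le> (n::nat)"
  shows "(\<Sum>i<n. P ((i + k) mod n)) = (\<Sum>i<n. P i)"
proof (induction k)
  case (Suc k)
  obtain m where n: "n = Suc m"
    using assms by (cases n) auto
  have rotate_one: "(\<Sum>i<n. Q (Suc i mod n)) = (\<Sum>i<n. Q i)" for Q
  proof -
    have "(\<Sum>i<Suc m. Q (Suc i mod Suc m)) = (\<Sum>i<m. Q (Suc i mod Suc m)) + Q 0"
      by simp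
    also have "(\<Sum>i<m. Q (Suc i mod Suc m)) = (\<Sum>i<m. Q (Suc i))"
      by (intro sum.cong) auto
    also have "(\<Sum>i<m. Q (Suc i)) + Q 0 = (\<Sum>i<Suc m. Q i)"
      by (subst sum.lessThan_Suc_shift) (simp add: add.commute)
    finally show ?thesis
      by (simp add: n)
  qed
  have "(\<Sum>i<n. P ((i + Suc k) mod n)) = (\<Sum>i<n. (\<lambda>i. P ((i + k) mod n)) (Suc i mod n))"
    by (intro sum.cong refl) (simp add: mod_add_left_eq)
  also have "\<dots> = (\<Sum>i<n. P ((i + k) mod n))"
    by (rule rotate_one)
  finally show ?case
    using Suc by simp
qed simp

lemma desc_coeffs_qtwist:
  assumes "1 \<le> n" "(\<Sum>i<n. P i) = 0" "j < n"
  shows "desc_coeffs (n-1) (qtwist P) j = inverse qq ^ 2 * qtwist (\<lambda>i. P (Suc i mod n)) j"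
proof (cases "j < n - 1")
  case True
  then show ?thesis
    by (simp add: desc_coeffs_eq qtwist_def algebra_simps power2_eq_square)
next
  case False
  then have j: "j = n - 1"
    using assms by simp
  have "(\<Sum>i<n. P i) = P 0 + (\<Sum>i\<in>{1..n-1}. P i)"
    using assms(1) by (cases n) (simp_all add: atLeast0AtMost[symmetric] lessThan_Suc_atMost
        sum.atLeast_Suc_atMost)
  then have rest: "(\<Sum>i\<in>{Suc 0..n - Suc 0}. P i) = - P 0"
    using assms(2) by (simp add: add_eq_0_iff)
  have "desc_coeffs (n-1) (qtwist P) j
      = inverse qq ^ (n-1) * P 0 - (qq - inverse qq) * inverse qq ^ Suc (n-1) * P 0"
    using j by (simp add: desc_coeffs_eq desc_coeff_top_qtwist rest)
  also have "\<dots> = inverse qq ^ (n-1) * P 0 * (1 - qq * inverse qq + inverse qq * inverse qq)"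
    by (simp add: algebra_simps)
  also have "\<dots> = inverse qq ^ 2 * (inverse qq ^ (n-1) * P 0)"
    using qq_nonzero by (simp add: algebra_simps power2_eq_square)
  finally show ?thesis
    using j assms(1) by (simp add: qtwist_def)
qed

lemma funpow_desc_coeffs_qtwist:
  assumes "1 \<le> n" "(\<Sum>i<n. P i) = 0" "j < n"
  shows "(desc_coeffs (n-1) ^^ k) (qtwist P) j = inverse qq ^ (2*k) * qtwist (\<lambda>i. P ((i + k) mod n)) j"
  using assms(3)
proof (induction k arbitrary: j)
  case (Suc k)
  let ?P = "\<lambda>i. P ((i + k) mod n)"
  have "(\<Sum>i<n. ?P i) = 0"
    using sum_lessThan_rotate[OF assms(1), of P k] assms(2) by simp
  have "(desc_coeffs (n-1) ^^ Suc k) (qtwist P) j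
      = desc_coeffs (n-1) (\<lambda>i. inverse qq ^ (2*k) * qtwist ?P i) j"
    using Suc assms by (simp, intro desc_coeffs_cong) auto
  also have "\<dots> = inverse qq ^ (2*k) * (inverse qq ^ 2 * qtwist (\<lambda>i. ?P (Suc i mod n)) j)"
    using desc_coeffs_qtwist[OF assms(1) \<open>(\<Sum>i<n. ?P i) = 0\<close> Suc.prems]
    by (simp add: desc_coeffs_scale)
  also have "qtwist (\<lambda>i. ?P (Suc i mod n)) j = qtwist (\<lambda>i. P ((i + Suc k) mod n)) j"
    by (simp add: qtwist_def mod_add_left_eq)
  finally show ?case
    by (simp add: power_add power2_eq_square algebra_simps)
qed (simp add: qtwist_def)

lemma funpow_desc_coeffs_qtwist_full:
  assumes "1 \<le> n" "(\<Sum>i<n. P i) = 0" "j < n"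
  shows "(desc_coeffs (n-1) ^^ n) (qtwist P) j = inverse qq ^ (2*n) * qtwist P j"
  using funpow_desc_coeffs_qtwist[OF assms, of n] assms(3) by (simp add: qtwist_def)

lemma delta_decomposition:
  assumes "1 \<le> n" "i < n"
  obtains \<alpha> P where "(\<Sum>j<n. P j) = 0"
    "\<And>j. (if j = i then 1 else 0) = \<alpha> * qpow_coeffs j + qtwist P j"
proof -
  define Z where "Z = (\<Sum>j<n. qq ^ (2*j))"
  have "(qq^2) ^ n - 1 = (qq^2 - 1) * Z"
    unfolding Z_def power_mult by (rule power_diff_1_eq)
  then have "Z \<noteq> 0"
    using qq_power_neq_one[of "2*n"] assms(1) by (auto simp: power_mult)
  define \<alpha> where "\<alpha> = qq ^ i / Z"
  define P where "P = (\<lambda>j. qq ^ j * ((if j = i then 1 else 0) - \<alpha> * qpow_coeffs j))"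
  have "P j = (if j = i then qq ^ j else 0) - \<alpha> * qq ^ (2*j)" for j
    by (simp add: P_def qpow_coeffs_def algebra_simps power_add[symmetric] mult_2[symmetric])
  then have "(\<Sum>j<n. P j) = qq ^ i - \<alpha> * Z"
    using assms by (simp add: sum_subtractf Z_def sum_distrib_left)
  also have "\<dots> = 0"
    using \<open>Z \<noteq> 0\<close> by (simp add: \<alpha>_def)
  finally have "(\<Sum>j<n. P j) = 0" .
  moreover have "(if j = i then 1 else 0) = \<alpha> * qpow_coeffs j + qtwist P j" for j
  proof -
    have "inverse qq ^ j * qq ^ j = 1"
      using qq_nonzero by (simp add: power_mult_distrib[symmetric])
    then show ?thesis
      by (simp add: qtwist_def P_def mult.assoc[symmetric])
  qed
  ultimately show thesis
    using that by blast
qed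

section \<open>Eigenvectors of the full twist\<close>

definition twist_eigval :: "nat \<Rightarrow> int \<Rightarrow> K" where
  "twist_eigval n k = qq powi (int n * (int n - 1 - 2 * k))"

lemma twist_eigval_add_one: "twist_eigval n (k + 1) = inverse qq ^ (2*n) * twist_eigval n k"
proof -
  have e: "int n * (int n - 1 - 2 * (k + 1)) = int n * (int n - 1 - 2 * k) + (- int (2*n))"
    by (simp add: algebra_simps)
  have "twist_eigval n (k + 1) = twist_eigval n k * qq powi (- int (2*n))"
    unfolding twist_eigval_def e by (rule power_int_add) (simp add: qq_nonzero)
  also have "qq powi (- int (2*n)) = inverse qq ^ (2*n)"
    by (simp only: power_int_minus power_int_of_nat power_inverse)
  finally show ?thesis
    by (simp add: mult.commute)
qed

lemma twist_eigval_inj: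
  assumes "1 \<le> n" "twist_eigval n (int a) = twist_eigval n (int b)"
  shows "a = b"
proof -
  have False if "twist_eigval n (int x) = twist_eigval n (int y)" "x < y" for x y
  proof -
    define E where "E = int n * (int n - 1 - 2 * int y)"
    define N where "N = 2 * n * (y - x)"
    have "int n * (int n - 1 - 2 * int x) = E + int N"
      using \<open>x < y\<close> by (simp add: E_def N_def of_nat_diff algebra_simps)
    then have "twist_eigval n (int x) = qq powi E * qq ^ N"
      unfolding twist_eigval_def using qq_nonzero by (simp add: power_int_add)
    then have "qq powi E * qq ^ N = qq powi E * 1"
      using that(1) by (simp add: twist_eigval_def E_def)
    then have "qq ^ N = 1"
      using qq_nonzero by simp
    moreover have "N > 0"
      using \<open>x < y\<close> assms(1) by (simp add: N_def)
    ultimately show False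
      using qq_power_neq_one by blast
  qed
  then show ?thesis
    using assms(2) by (metis linorder_neqE_nat)
qed

lemma Bmat_eq_twist_eigval_power: "Bmat n k j = twist_eigval n (int j) ^ k"
proof -
  have e: "int k * int n * (int n - 1 - 2 * int j) = (int n * (int n - 1 - 2 * int j)) * int k"
    by (simp add: algebra_simps)
  have "Bmat n k j = (qq powi (int n * (int n - 1 - 2 * int j))) powi (int k)"
    unfolding Bmat_def e by (rule power_int_mult)
  then show ?thesis
    by (simp only: twist_eigval_def power_int_of_nat)
qed

lemma twist_eigval_all_even:
  "1 \<le> n \<Longrightarrow> (Rc False False False False ^ (n-1)) ^ n = twist_eigval n 0"
proof -
  assume "1 \<le> n"
  then have "int n * (int n - 1 - 2 * 0) = int ((n-1) * n)"
    by (simp add: of_nat_diff algebra_simps)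
  then have "twist_eigval n 0 = qq ^ ((n-1) * n)"
    unfolding twist_eigval_def by (simp only: power_int_of_nat)
  then show ?thesis
    by (simp add: Rc_def power_mult)
qed

lemma twist_eigval_all_odd:
  "1 \<le> n \<Longrightarrow> (Rc True True True True ^ (n-1)) ^ n = twist_eigval n (int (n-1))"
proof -
  assume "1 \<le> n"
  then have "int n * (int n - 1 - 2 * int (n-1)) = - int ((n-1) * n)"
    by (simp add: of_nat_diff algebra_simps)
  then have "twist_eigval n (int (n-1)) = inverse (qq ^ ((n-1) * n))"
    unfolding twist_eigval_def by (simp only: power_int_minus power_int_of_nat)
  also have "\<dots> = (- inverse qq) ^ ((n-1) * n)"
    by (cases "even n") (simp_all add: power_inverse)
  finally show ?thesis
    by (simp add: Rc_def power_mult)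
qed

lemma eigenvec_Phi_tau_create_comb_qpow_coeffs:
  assumes "1 \<le> n" "eigenvec n (Phi_tau n) \<mu> v"
  shows "eigenvec n (Phi_tau n) \<mu> (create_comb n qpow_coeffs v)"
proof -
  have "create_comb n ((desc_coeffs (n-1) ^^ n) qpow_coeffs) = create_comb n qpow_coeffs"
    by (rule ext, rule create_comb_cong, rule funpow_desc_coeffs_qpow_coeffs)
  then have "mvmul n (Phi_tau n) (create_comb n qpow_coeffs v)
      = create_comb n qpow_coeffs (\<lambda>u. \<mu> * v u)"
    using assms Phi_tau_create_comb[of n v qpow_coeffs] by (simp add: eigenvec_def)
  then show ?thesis
    using assms(2) by (simp add: eigenvec_def create_comb_scale)
qed

lemma eigenvec_Phi_tau_create_comb_qtwist:
  assumes "1 \<le> n" "(\<Sum>i<n. P i) = 0" "eigenvec n (Phi_tau n) \<mu> v"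
  shows "eigenvec n (Phi_tau n) (inverse qq ^ (2*n) * \<mu>) (create_comb n (qtwist P) v)"
proof -
  have "create_comb n ((desc_coeffs (n-1) ^^ n) (qtwist P))
      = create_comb n (\<lambda>j. inverse qq ^ (2*n) * qtwist P j)"
    by (rule ext, rule create_comb_cong, rule funpow_desc_coeffs_qtwist_full[OF assms(1,2)])
  then have "mvmul n (Phi_tau n) (create_comb n (qtwist P) v)
      = create_comb n (\<lambda>j. inverse qq ^ (2*n) * qtwist P j) (\<lambda>u. \<mu> * v u)"
    using assms Phi_tau_create_comb[of n v "qtwist P"] by (simp add: eigenvec_def)
  then have "mvmul n (Phi_tau n) (create_comb n (qtwist P) v)
      = (\<lambda>w. inverse qq ^ (2*n) * (\<mu> * create_comb n (qtwist P) v w))"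
    by (simp only: create_comb_scale_coeffs create_comb_scale)
  then show ?thesis
    using assms(3) by (simp add: eigenvec_def mult.assoc)
qed

text \<open>The invariant of the induction on the number of odd letters: a vector is a sum of
  eigenvectors of \<open>\<Phi>(\<tau>)\<close> for the eigenvalues with indices \<open>k\<close> and \<open>k - 1\<close>, where the
  second summand is killed by the creation operator with coefficients \<open>q\<^sup>j\<close> (and vanishes
  for \<open>k = 0\<close>, where the index \<open>-1\<close> is out of range).\<close>
definition twist_split :: "nat \<Rightarrow> nat \<Rightarrow> vec \<Rightarrow> bool" where
  "twist_split n k v \<longleftrightarrow> (\<exists>v1 v2. v = (\<lambda>u. v1 u + v2 u) \<and>
     eigenvec n (Phi_tau n) (twist_eigval n (int k)) v1 \<and>
     eigenvec n (Phi_tau n) (twist_eigval n (int k - 1)) v2 \<and>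
     create_comb n qpow_coeffs v2 = (\<lambda>u. 0) \<and> (k = 0 \<longrightarrow> v2 = (\<lambda>u. 0)))"

lemma twist_split_scale:
  assumes "twist_split n k v"
  shows "twist_split n k (\<lambda>u. a * v u)"
proof -
  obtain v1 v2 where "v = (\<lambda>u. v1 u + v2 u)"
    "eigenvec n (Phi_tau n) (twist_eigval n (int k)) v1"
    "eigenvec n (Phi_tau n) (twist_eigval n (int k - 1)) v2"
    "create_comb n qpow_coeffs v2 = (\<lambda>u. 0)" "k = 0 \<longrightarrow> v2 = (\<lambda>u. 0)"
    using assms unfolding twist_split_def by (elim exE conjE) (rule that)
  note v = this
  show ?thesis
    unfolding twist_split_def
    apply (rule exI[of _ "\<lambda>u. a * v1 u"], rule exI[of _ "\<lambda>u. a * v2 u"])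
    using v by (simp add: eigenvec_scale create_comb_scale distrib_left)
qed

lemma twist_split_create:
  assumes "1 \<le> n" "i < n" "twist_split n k v"
  shows "twist_split n (Suc k) (create n i v)"
proof -
  obtain v1 v2 where v: "v = (\<lambda>u. v1 u + v2 u)"
    and v1: "eigenvec n (Phi_tau n) (twist_eigval n (int k)) v1"
    and v2: "eigenvec n (Phi_tau n) (twist_eigval n (int k - 1)) v2"
    and killed: "create_comb n qpow_coeffs v2 = (\<lambda>u. 0)"
    using assms(3) unfolding twist_split_def by (elim exE conjE) (rule that)
  obtain \<alpha> P where P: "(\<Sum>j<n. P j) = 0"
    and delta: "\<And>j. (if j = i then 1 else 0) = \<alpha> * qpow_coeffs j + qtwist P j"
    using delta_decomposition[OF assms(1,2)] by blast
  define v1' where "v1' = create_comb n (qtwist P) v1"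
  define v2' where "v2' = (\<lambda>u. \<alpha> * create_comb n qpow_coeffs v1 u + create_comb n (qtwist P) v2 u)"
  have "create n i v = create_comb n (\<lambda>j. \<alpha> * qpow_coeffs j + qtwist P j) v"
    using assms(2) by (simp add: create_comb_delta[symmetric] delta[symmetric])
  also have "\<dots> = (\<lambda>u. v1' u + v2' u)"
    by (simp add: v v1'_def v2'_def create_comb_add_coeffs create_comb_scale_coeffs create_comb_add
        killed algebra_simps)
  finally have split: "create n i v = (\<lambda>u. v1' u + v2' u)" .
  have "twist_eigval n (int (Suc k)) = inverse qq ^ (2*n) * twist_eigval n (int k)"
    "twist_eigval n (int (Suc k) - 1) = inverse qq ^ (2*n) * twist_eigval n (int k - 1)"
    using twist_eigval_add_one[of n "int k"] twist_eigval_add_one[of n "int k - 1"]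
    by (simp_all only: of_nat_Suc add.commute[of 1] diff_add_cancel add_diff_cancel_right')
  note eigval_step = this
  have "eigenvec n (Phi_tau n) (twist_eigval n (int (Suc k))) v1'"
    unfolding v1'_def eigval_step by (rule eigenvec_Phi_tau_create_comb_qtwist[OF assms(1) P v1])
  moreover have "eigenvec n (Phi_tau n) (twist_eigval n (int (Suc k) - 1)) v2'"
  proof -
    have "eigenvec n (Phi_tau n) (twist_eigval n (int (Suc k) - 1)) (create_comb n qpow_coeffs v1)"
      using eigenvec_Phi_tau_create_comb_qpow_coeffs[OF assms(1) v1] by simp
    moreover have "eigenvec n (Phi_tau n) (twist_eigval n (int (Suc k) - 1)) (create_comb n (qtwist P) v2)"
      unfolding eigval_step by (rule eigenvec_Phi_tau_create_comb_qtwist[OF assms(1) P v2])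
    ultimately show ?thesis
      unfolding v2'_def by (intro eigenvec_add eigenvec_scale)
  qed
  ultimately have eig: "eigenvec n (Phi_tau n) (twist_eigval n (int (Suc k))) v1'"
      "eigenvec n (Phi_tau n) (twist_eigval n (int (Suc k) - 1)) v2'" .
  have "create_comb n qpow_coeffs v2' u = 0" for u
  proof -
    have "create_comb n qpow_coeffs v2' u
        = \<alpha> * create_comb n qpow_coeffs (create_comb n qpow_coeffs v1) u
          - create_comb n (qtwist P) (create_comb n qpow_coeffs v2) u"
      unfolding v2'_def by (simp add: create_comb_add create_comb_scale create_comb_anticomm[of n qpow_coeffs "qtwist P" v2])
    then show ?thesis
      by (simp add: create_comb_square killed)
  qed
  then show ?thesis
    unfolding twist_split_def using split eig by blast
qed

lemma Suc_length_filter_list_update: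
  "i < length w \<Longrightarrow> P (w!i) \<Longrightarrow> \<not> P a \<Longrightarrow> Suc (length (filter P (w[i := a]))) = length (filter P w)"
  by (induction w arbitrary: i) (auto split: nat.splits)

lemma twist_split_basis_vec:
  assumes "1 \<le> n" "w \<in> words n"
  shows "twist_split n (length (filter id w)) (basis_vec w)"
  using assms(2)
proof (induction "length (filter id w)" arbitrary: w)
  case 0
  then have "w = replicate n False"
    by (auto simp: words_def filter_empty_conv intro!: replicate_eqI)
  then have "eigenvec n (Phi_tau n) (twist_eigval n 0) (basis_vec w)"
    using eigenvec_Phi_tau_const[OF assms(1), of False] twist_eigval_all_even[OF assms(1)] by simp
  then show ?case
    unfolding twist_split_def \<open>0 = _\<close>[symmetric] by force
next
  case (Suc k)
  have "filter id w \<noteq> []"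
    using Suc.hyps(2) by auto
  then obtain i where i: "i < n" "w!i"
    using Suc.prems by (auto simp: filter_empty_conv in_set_conv_nth words_def)
  have "length (filter id (w[i := False])) = k"
    using Suc_length_filter_list_update[of i w id False] Suc.hyps(2) Suc.prems i
    by (simp add: words_def)
  then have "twist_split n k (basis_vec (w[i := False]))"
    using Suc.hyps(1)[of "w[i := False]"] Suc.prems by simp
  then have "twist_split n (Suc k) (create n i (basis_vec (w[i := False])))"
    by (rule twist_split_create[OF assms(1) i(1)])
  then have "twist_split n (Suc k) (\<lambda>u. jw_sign w i * (jw_sign w i * basis_vec w u))"
    using create_basis_vec[OF Suc.prems i] twist_split_scale by simp
  then show ?case
    using Suc.hyps(2) by (simp add: mult.assoc[symmetric])
qed

lemma basis_vec_twist_eigen_decomposition: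
  assumes "1 \<le> n" "w \<in> words n"
  obtains V where "basis_vec w = (\<lambda>u. \<Sum>c<n. V c u)"
    "\<And>c. c < n \<Longrightarrow> eigenvec n (Phi_tau n) (twist_eigval n (int c)) (V c)"
proof (cases "length (filter id w) = n")
  case True
  have "length w = n"
    using assms(2) by (simp add: words_def)
  have "w = replicate n True"
  proof (rule replicate_eqI)
    show "x = True" if "x \<in> set w" for x
    proof (rule ccontr)
      assume "x \<noteq> True"
      then have "length (filter id w) < length w"
        using that by (intro length_filter_less) auto
      then show False
        using True \<open>length w = n\<close> by simp
    qed
  qed fact
  then have "eigenvec n (Phi_tau n) (twist_eigval n (int (n-1))) (basis_vec w)"
    using eigenvec_Phi_tau_const[OF assms(1), of True] twist_eigval_all_odd[OF assms(1)] by simp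
  moreover have "basis_vec w u = (\<Sum>c<n. (if c = n - 1 then basis_vec w else (\<lambda>u. 0)) u)" for u
    using assms(1) by (simp add: if_distrib[of "\<lambda>f. f u"] sum.delta' cong: if_cong)
  ultimately show thesis
    by (intro that[of "\<lambda>c. if c = n - 1 then basis_vec w else (\<lambda>u. 0)"]) auto
next
  case False
  define k where "k = length (filter id w)"
  have "k < n"
    using False assms(2) length_filter_le[of id w] by (simp add: k_def words_def)
  obtain v1 v2 where v: "basis_vec w = (\<lambda>u. v1 u + v2 u)"
    and v1: "eigenvec n (Phi_tau n) (twist_eigval n (int k)) v1"
    and v2: "eigenvec n (Phi_tau n) (twist_eigval n (int k - 1)) v2"
    and v2_zero: "k = 0 \<longrightarrow> v2 = (\<lambda>u. 0)"
    using twist_split_basis_vec[OF assms] unfolding twist_split_def k_def[symmetric]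
    by (elim exE conjE) (rule that)
  define V where "V c = (if c = k then v1 else if Suc c = k then v2 else (\<lambda>u. 0))" for c
  have "(\<Sum>c<n. V c u) = v1 u + v2 u" for u
  proof -
    have "(\<Sum>c<n. V c u) = (\<Sum>c<n. (if c = k then v1 u else 0) + (if Suc c = k then v2 u else 0))"
      by (intro sum.cong) (auto simp: V_def)
    also have "\<dots> = v1 u + (\<Sum>c<n. if Suc c = k then v2 u else 0)"
      using \<open>k < n\<close> by (simp add: sum.distrib)
    also have "(\<Sum>c<n. if Suc c = k then v2 u else 0) = v2 u"
      using \<open>k < n\<close> v2_zero by (cases k) (simp_all add: sum.delta')
    finally show ?thesis .
  qed
  then have "basis_vec w = (\<lambda>u. \<Sum>c<n. V c u)"
    by (simp add: v)
  moreover have "eigenvec n (Phi_tau n) (twist_eigval n (int c)) (V c)" for c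
    using v1 v2 by (auto simp: V_def of_nat_diff)
  ultimately show thesis
    using that by blast
qed

lemma Phi_tau_pow_entry_power_sum:
  assumes "1 \<le> n" "w \<in> words n" "w' \<in> words n"
  obtains a where "\<And>j. Phi_tau_pow n j w' w = (\<Sum>c<n. twist_eigval n (int c) ^ j * a c)"
proof -
  obtain V where V: "basis_vec w = (\<lambda>u. \<Sum>c<n. V c u)"
    "\<And>c. c < n \<Longrightarrow> eigenvec n (Phi_tau n) (twist_eigval n (int c)) (V c)"
    using basis_vec_twist_eigen_decomposition[OF assms(1,2)] by blast
  have "Phi_tau_pow n j w' w = (\<Sum>c<n. twist_eigval n (int c) ^ j * V c w')" for j
  proof -
    have "Phi_tau_pow n j w' w = mvmul n (mpow n (Phi_tau n) j) (basis_vec w) w'"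
      using assms(2,3) by (simp add: mvmul_basis_vec Phi_tau_pow_def)
    also have "\<dots> = (\<Sum>c<n. mvmul n (mpow n (Phi_tau n) j) (V c) w')"
      by (simp add: V(1) mvmul_sum)
    also have "\<dots> = (\<Sum>c<n. twist_eigval n (int c) ^ j * V c w')"
      using eigenvec_mpow[OF V(2)] by (intro sum.cong) (simp_all add: eigenvec_def)
    finally show ?thesis .
  qed
  then show thesis
    by (rule that)
qed

section \<open>Lagrange interpolation and the matrix C(n)\<close>

definition lagrange_basis :: "(nat \<Rightarrow> 'a::field) \<Rightarrow> nat \<Rightarrow> nat \<Rightarrow> 'a poly" where
  "lagrange_basis x n i =
     smult (inverse (\<Prod>k\<in>{..<n}-{i}. x i - x k)) (\<Prod>k\<in>{..<n}-{i}. [:- x k, 1:])"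

lemma poly_lagrange_basis:
  assumes "inj_on x {..<n}" "i < n" "m < n"
  shows "poly (lagrange_basis x n i) (x m) = (if i = m then 1 else 0)"
proof (cases "i = m")
  case True
  have "(\<Prod>k\<in>{..<n}-{i}. x i - x k) \<noteq> 0"
    using assms(1,2) by (auto simp: inj_on_eq_iff)
  then show ?thesis
    using True by (simp add: lagrange_basis_def poly_prod)
next
  case False
  then have "(\<Prod>k\<in>{..<n}-{i}. x m - x k) = 0"
    using assms(3) by (intro prod_zero) auto
  then show ?thesis
    using False by (simp add: lagrange_basis_def poly_prod)
qed

lemma degree_lagrange_basis:
  assumes "i < n"
  shows "degree (lagrange_basis x n i) < n"
proof -
  have "degree (lagrange_basis x n i) \<le> degree (\<Prod>k\<in>{..<n}-{i}. [:- x k, 1:])"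
    unfolding lagrange_basis_def by (rule degree_smult_le)
  also have "\<dots> \<le> (\<Sum>k\<in>{..<n}-{i}. 1)"
    using degree_prod_sum_le[of "{..<n}-{i}" "\<lambda>k. [:- x k, 1:]"] by (simp add: o_def)
  also have "\<dots> < n"
    using assms by simp
  finally show ?thesis .
qed

lemma poly_eq_sum_coeff_lessThan:
  fixes p :: "'a::comm_semiring_1 poly"
  assumes "degree p < n"
  shows "poly p a = (\<Sum>k<n. coeff p k * a ^ k)"
proof -
  have "poly p a = (\<Sum>k\<le>degree p. coeff p k * a ^ k)"
    by (simp add: poly_altdef)
  also have "\<dots> = (\<Sum>k<n. coeff p k * a ^ k)"
    by (rule sum.mono_neutral_left) (use assms in \<open>auto simp: coeff_eq_0\<close>)
  finally show ?thesis .
qed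

lemma lagrange_coeffs_mult_vandermonde:
  assumes "inj_on x {..<n}" "i < n" "j < n"
  shows "(\<Sum>k<n. coeff (lagrange_basis x n i) k * x j ^ k) = (if i = j then 1 else 0)"
proof -
  have "(\<Sum>k<n. coeff (lagrange_basis x n i) k * x j ^ k) = poly (lagrange_basis x n i) (x j)"
    by (rule poly_eq_sum_coeff_lessThan[symmetric]) (rule degree_lagrange_basis[OF assms(2)])
  then show ?thesis
    using poly_lagrange_basis[OF assms] by simp
qed

lemma vandermonde_mult_lagrange_coeffs:
  assumes "inj_on x {..<n}" "i < n" "j < n"
  shows "(\<Sum>k<n. x k ^ i * coeff (lagrange_basis x n k) j) = (if i = j then 1 else 0)"
proof -
  define Q where "Q = (\<Sum>k<n. smult (x k ^ i) (lagrange_basis x n k))"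
  have "Q = monom 1 i"
  proof (rule poly_eqI_degree[of "x ` {..<n}"])
    fix a assume "a \<in> x ` {..<n}"
    then obtain m where m: "m < n" "a = x m"
      by auto
    have "poly Q a = (\<Sum>k<n. x k ^ i * (if k = m then 1 else 0))"
      unfolding Q_def poly_sum using m assms(1) by (intro sum.cong) (auto simp: poly_lagrange_basis)
    then show "poly Q a = poly (monom 1 i) a"
      using m by (simp add: poly_monom if_distrib[of "\<lambda>b. _ * b"] sum.delta' cong: if_cong)
  next
    have card: "card (x ` {..<n}) = n"
      using card_image[OF assms(1)] by simp
    have "degree (smult (x k ^ i) (lagrange_basis x n k)) \<le> n - 1" if "k < n" for k
      using degree_smult_le[of "x k ^ i" "lagrange_basis x n k"] degree_lagrange_basis[OF that, of x]
      by linarith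
    then have "degree Q \<le> n - 1"
      unfolding Q_def by (intro degree_sum_le) auto
    then show "degree Q < card (x ` {..<n})"
      using card assms(2) by linarith
    show "degree (monom (1::'a) i) < card (x ` {..<n})"
      using card assms(2) degree_monom_le[of "1::'a" i] by linarith
  qed
  then have "coeff Q j = (if i = j then 1 else 0)"
    by simp
  moreover have "coeff Q j = (\<Sum>k<n. x k ^ i * coeff (lagrange_basis x n k) j)"
    unfolding Q_def coeff_sum by simp
  ultimately show ?thesis
    by simp
qed

lemma inj_on_twist_eigval:
  assumes "1 \<le> n"
  shows "inj_on (\<lambda>c. twist_eigval n (int c)) {..<n}"
  by (rule inj_onI) (rule twist_eigval_inj[OF assms])

lemma Cmat_eq_lagrange_coeffs:
  assumes "1 \<le> n"
  shows "Cmat n = (\<lambda>i j. if i < n \<and> j < n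
            then coeff (lagrange_basis (\<lambda>c. twist_eigval n (int c)) n i) j else 0)"
    (is "_ = ?C")
  unfolding Cmat_def
proof (rule the_equality)
  have left: "(\<Sum>k<n. ?C i k * Bmat n k j) = (if i = j then 1 else 0)" if "i < n" "j < n" for i j
    using lagrange_coeffs_mult_vandermonde[OF inj_on_twist_eigval[OF assms] that] that
    by (simp add: Bmat_eq_twist_eigval_power)
  have right: "(\<Sum>k<n. Bmat n i k * ?C k j) = (if i = j then 1 else 0)" if "i < n" "j < n" for i j
    using vandermonde_mult_lagrange_coeffs[OF inj_on_twist_eigval[OF assms] that] that
    by (simp add: Bmat_eq_twist_eigval_power)
  show "(\<forall>i j. (i \<ge> n \<or> j \<ge> n) \<longrightarrow> ?C i j = 0) \<and>
      (\<forall>i<n. \<forall>j<n. (\<Sum>k<n. ?C i k * Bmat n k j) = (if i = j then 1 else 0)) \<and>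
      (\<forall>i<n. \<forall>j<n. (\<Sum>k<n. Bmat n i k * ?C k j) = (if i = j then 1 else 0))"
    using left right by auto
  fix C
  assume C: "(\<forall>i j. (i \<ge> n \<or> j \<ge> n) \<longrightarrow> C i j = 0) \<and>
      (\<forall>i<n. \<forall>j<n. (\<Sum>k<n. C i k * Bmat n k j) = (if i = j then 1 else 0)) \<and>
      (\<forall>i<n. \<forall>j<n. (\<Sum>k<n. Bmat n i k * C k j) = (if i = j then 1 else 0))"
  show "C = ?C"
  proof (intro ext)
    fix i j
    show "C i j = ?C i j"
    proof (cases "i < n \<and> j < n")
      case True
      \<comment> \<open>a left inverse equals a right inverse: \<open>C = C (B ?C) = (C B) ?C = ?C\<close>\<close>
      have "C i j = (\<Sum>l<n. C i l * (if l = j then 1 else 0))"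
        using True by (simp add: if_distrib[of "\<lambda>b. _ * b"] sum.delta' cong: if_cong)
      also have "\<dots> = (\<Sum>l<n. C i l * (\<Sum>k<n. Bmat n l k * ?C k j))"
        using True right by (intro sum.cong) auto
      also have "\<dots> = (\<Sum>k<n. (\<Sum>l<n. C i l * Bmat n l k) * ?C k j)"
        by (simp add: sum_distrib_left sum_distrib_right mult.assoc) (rule sum.swap)
      also have "\<dots> = (\<Sum>k<n. (if i = k then 1 else 0) * ?C k j)"
        using True C by (intro sum.cong) auto
      also have "\<dots> = ?C i j"
        using True by (simp add: if_distrib[of "\<lambda>b. b * _"] sum.delta cong: if_cong)
      finally show ?thesis .
    next
      case False
      then show ?thesis
        using C by (auto simp: not_less)
    qed
  qed
qed

lemma Cmat_mult_twist_eigval_powers: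
  assumes "1 \<le> n" "i < n" "c < n"
  shows "(\<Sum>j<n. Cmat n i j * twist_eigval n (int c) ^ j) = (if i = c then 1 else 0)"
  using lagrange_coeffs_mult_vandermonde[OF inj_on_twist_eigval[OF assms(1)] assms(2,3)] assms
  by (simp add: Cmat_eq_lagrange_coeffs)

lemma twist_power_sum_interpolation:
  assumes "1 \<le> n" "\<And>j. f j = (\<Sum>c<n. twist_eigval n (int c) ^ j * a c)"
  shows "f m = (\<Sum>i<n. \<Sum>j<n. twist_eigval n (int i) ^ m * Cmat n i j * f j)"
proof -
  have coeff: "(\<Sum>j<n. Cmat n i j * f j) = a i" if "i < n" for i
  proof -
    have "(\<Sum>j<n. Cmat n i j * f j) = (\<Sum>j<n. \<Sum>c<n. a c * (Cmat n i j * twist_eigval n (int c) ^ j))"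
      by (simp add: assms(2) sum_distrib_left mult_ac)
    also have "\<dots> = (\<Sum>c<n. a c * (\<Sum>j<n. Cmat n i j * twist_eigval n (int c) ^ j))"
      by (subst sum.swap) (simp add: sum_distrib_left)
    also have "\<dots> = (\<Sum>c<n. if c = i then a c else 0)"
      using assms(1) that by (intro sum.cong) (auto simp: Cmat_mult_twist_eigval_powers)
    finally show ?thesis
      using that by simp
  qed
  have "(\<Sum>i<n. \<Sum>j<n. twist_eigval n (int i) ^ m * Cmat n i j * f j)
      = (\<Sum>i<n. twist_eigval n (int i) ^ m * (\<Sum>j<n. Cmat n i j * f j))"
    by (simp add: sum_distrib_left mult.assoc)
  also have "\<dots> = (\<Sum>i<n. twist_eigval n (int i) ^ m * a i)"
    by (intro sum.cong) (simp_all add: coeff)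
  also have "\<dots> = f m"
    by (simp add: assms(2))
  finally show ?thesis ..
qed

theorem proposition4p5:
  fixes n m :: nat
  assumes "n \<ge> 2"
  shows "\<forall>w'\<in>words n. \<forall>w\<in>words n.
    Phi_tau_pow n m w' w =
      (\<Sum>i<n. \<Sum>j<n. qq powi (int m * int n * (int n - 1 - 2 * int i)) * Cmat n i j
                         * Phi_tau_pow n j w' w)"
proof (intro ballI)
  fix w' w
  assume "w' \<in> words n" "w \<in> words n"
  have "1 \<le> n"
    using assms by simp
  obtain a where a: "\<And>j. Phi_tau_pow n j w' w = (\<Sum>c<n. twist_eigval n (int c) ^ j * a c)"
    using Phi_tau_pow_entry_power_sum[OF \<open>1 \<le> n\<close> \<open>w \<in> words n\<close> \<open>w' \<in> words n\<close>] by blast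
  have power: "qq powi (int m * int n * (int n - 1 - 2 * int i)) = twist_eigval n (int i) ^ m" for i
    using Bmat_eq_twist_eigval_power[of n m i] by (simp only: Bmat_def)
  show "Phi_tau_pow n m w' w =
      (\<Sum>i<n. \<Sum>j<n. qq powi (int m * int n * (int n - 1 - 2 * int i)) * Cmat n i j
                         * Phi_tau_pow n j w' w)"
    unfolding power by (rule twist_power_sum_interpolation[OF \<open>1 \<le> n\<close> a])
qed

end
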